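(* Let $(X_k)_{k\ge1}$ be nonnegative random variables (interarrival times) with $S_0=0$, $S_k=X_1+\dots+X_k$, and counting process $N(t)=\max\{k:S_k\le t\}$, $t\ge0$. Let $T$ be a nonnegative random variable independent of $(X_k)_{k\ge1}$. Assume: (a) $T$ is DFR; (b) $T$ and $X_1$ do not both have positive probability mass at $0$; (c) for each $n=1,2,\dots$ there exist a Borel set $N_n\subseteq\mathbb R_+^n$ with $P((X_1,\dots,X_n)\in N_n)=1$ and an $N_n$-distributional version $\{Z^{\mathbf x}_{n+1}:\mathbf x\in N_n\}$ of $X_{n+1}$ given $(X_1,\dots,X_n)$ such that (c.1) $Z_2^{x_1}\le_{ST}X_1$ for all $x_1\in N_1$; (c.2) for $n=1,2,\dots$, $N_{n+1}\subseteq N_n\times\mathbb R_+$ and $Z^{(\mathbf x,x_{n+1})}_{n+2}\le_{ST}Z^{\mathbf x}_{n+1}$ for all $(\mathbf x,x_{n+1})\in N_{n+1}$. Then $N(T)$ is discrete DFR.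
   Context: A nonnegative random variable with survival function $\overline G$ is DFR if for every $z\ge0$ the map $t\mapsto\overline G(z+t)/\overline G(t)$ is increasing (on $\{t:\overline G(t)>0\}$). A random variable $N$ with values in $\{0,1,2,\dots\}$ is discrete DFR if $P(N\ge n+1)^2\le P(N\ge n)P(N\ge n+2)$ for all $n=0,1,2,\dots$. $X\le_{ST}Y$ means $P(X>t)\le P(Y>t)$ for all real $t$. Let $F_n$ be the law of $(X_1,\dots,X_n)$. A family $\{\mu^{\mathbf x}:\mathbf x\in N_n\}$ of probability measures on $\mathbb R_+$, with $\mathbf x\mapsto\mu^{\mathbf x}(B)$ measurable for each Borel $B$, is an $N_n$ regular conditional distribution of $X_{n+1}$ given $(X_1,\dots,X_n)$ if $P((X_1,\dots,X_n)\in A,X_{n+1}\in B)=\int_A\mu^{\mathbf x}(B)\,dF_n(\mathbf x)$ for all Borel $A\subseteq N_n$, $B\subseteq\mathbb R_+$; an $N_n$-distributional version of $X_{n+1}$ given $(X_1,\dots,X_n)$ is a family of random variables $\{Z^{\mathbf x}_{n+1}:\mathbf x\in N_n\}$ with $Z^{\mathbf x}_{n+1}$ having law $\mu^{\mathbf x}$ for such a regular conditional distribution. *)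

theory Defs
  imports "HOL-Probability.Probability"
begin

definition survival :: "'a measure \<Rightarrow> ('a \<Rightarrow> real) \<Rightarrow> real \<Rightarrow> real" where
  "survival M T t = measure M {\<omega>\<in>space M. T \<omega> > t}"

definition DFR :: "'a measure \<Rightarrow> ('a \<Rightarrow> real) \<Rightarrow> bool" where
  "DFR M T \<longleftrightarrow> (\<forall>z\<ge>0. mono_on {t. 0 \<le> t \<and> survival M T t > 0}
      (\<lambda>t. survival M T (z + t) / survival M T t))"

definition discrete_DFR :: "'a measure \<Rightarrow> ('a \<Rightarrow> enat) \<Rightarrow> bool" where
  "discrete_DFR M N \<longleftrightarrow> (\<forall>n::nat.
     (measure M {\<omega>\<in>space M. N \<omega> \<ge> enat (n+1)})\<^sup>2
       \<le> measure M {\<omega>\<in>space M. N \<omega> \<ge> enat n} * measure M {\<omega>\<in>space M. N \<omega> \<ge> enat (n+2)})"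

definition st_le :: "real measure \<Rightarrow> real measure \<Rightarrow> bool" where
  "st_le \<mu> \<nu> \<longleftrightarrow> (\<forall>t. measure \<mu> {t<..} \<le> measure \<nu> {t<..})"

definition partial_sum :: "(nat \<Rightarrow> 'a \<Rightarrow> real) \<Rightarrow> nat \<Rightarrow> 'a \<Rightarrow> real" where
  "partial_sum X k \<omega> = (\<Sum>i\<in>{1..k}. X i \<omega>)"

definition counting :: "(nat \<Rightarrow> 'a \<Rightarrow> real) \<Rightarrow> real \<Rightarrow> 'a \<Rightarrow> enat" where
  "counting X t \<omega> = Sup {enat k | k. partial_sum X k \<omega> \<le> t}"

abbreviation vecM :: "nat \<Rightarrow> (nat \<Rightarrow> real) measure" where
  "vecM n \<equiv> Pi\<^sub>M {1..n} (\<lambda>_. borel)"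

definition first_n :: "(nat \<Rightarrow> 'a \<Rightarrow> real) \<Rightarrow> nat \<Rightarrow> 'a \<Rightarrow> (nat \<Rightarrow> real)" where
  "first_n X n \<omega> = (\<lambda>i\<in>{1..n}. X i \<omega>)"

text \<open>\<mu> is an N_n regular conditional distribution of X_(n+1) given (X_1,...,X_n):
  each \<mu> x (x in N_n) is a probability measure on R_+ (a Borel measure on R with
  no mass on the negatives), x \<mapsto> \<mu> x B is measurable on N_n, and the disintegration
  formula holds for all Borel A \<subseteq> N_n and Borel B \<subseteq> R_+.\<close>
definition N_reg_cond_dist ::
  "'a measure \<Rightarrow> (nat \<Rightarrow> 'a \<Rightarrow> real) \<Rightarrow> nat \<Rightarrow> (nat \<Rightarrow> real) set
     \<Rightarrow> ((nat \<Rightarrow> real) \<Rightarrow> real measure) \<Rightarrow> bool" where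
  "N_reg_cond_dist M X n Nn \<mu> \<longleftrightarrow>
     (\<forall>x\<in>Nn. prob_space (\<mu> x) \<and> sets (\<mu> x) = sets borel \<and> emeasure (\<mu> x) {..<0} = 0)
   \<and> (\<forall>B\<in>sets borel. (\<lambda>x. emeasure (\<mu> x) B) \<in> borel_measurable (restrict_space (vecM n) Nn))
   \<and> (\<forall>A\<in>sets (vecM n). A \<subseteq> Nn \<longrightarrow> (\<forall>B\<in>sets borel. B \<subseteq> {0..} \<longrightarrow>
        emeasure M {\<omega>\<in>space M. first_n X n \<omega> \<in> A \<and> X (Suc n) \<omega> \<in> B}
          = (\<integral>\<^sup>+x. emeasure (\<mu> x) B * indicator A x \<partial>(distr M (vecM n) (first_n X n)))))"

end

theory Submission
  imports Defs
begin

text \<open>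
  Write
  \<open>reach n = P(N(T) \<ge> n) = P(S\<^sub>n \<le> T)\<close> and \<open>tail u = P(T \<ge> u)\<close>; discrete DFR of \<open>N(T)\<close>
  is the log-concavity \<open>reach(n+1)\<^sup>2 \<le> reach n \<cdot> reach(n+2)\<close>. By independence
  \<open>reach n = E[tail(S\<^sub>n)]\<close>, and disintegrating along the regular conditional distribution
  \<open>\<mu>\<^sub>n\<close> gives \<open>reach(n+1) = E[C\<^sub>n]\<close> for the conditional tail
  \<open>C\<^sub>n = E[tail(S\<^sub>n + X\<^sub>n\<^sub>+\<^sub>1) | X\<^sub>1,\<dots>,X\<^sub>n] \<le> tail(S\<^sub>n)\<close>. Cauchy--Schwarz yields
  \<open>reach(n+1)\<^sup>2 \<le> E[tail(S\<^sub>n)] \<cdot> E[C\<^sub>n\<^sup>2 / tail(S\<^sub>n)]\<close>, and the last factor is at most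
  \<open>reach(n+2)\<close>: DFR makes \<open>tail\<close> log-supermodular, which together with the stochastic
  monotonicity (c.2) of the kernels gives \<open>tail(S\<^sub>n\<^sub>+\<^sub>1) C\<^sub>n / tail(S\<^sub>n) \<le> C\<^sub>n\<^sub>+\<^sub>1\<close>; the tower
  property then integrates this to \<open>reach(n+2)\<close>. For \<open>n = 0\<close> the same step uses (c.1).
\<close>

text \<open>Keep the index set \<open>{1..n}\<close> of \<open>vecM n\<close> from being rewritten to \<open>{Suc 0..n}\<close>,
  so that the measurability facts about it keep applying.\<close>

declare One_nat_def[simp del]

lemma Inter_greaterThan_shrink:
  assumes "c > 0"
  shows "(\<Inter>k. {a - c / real (Suc k) <..}) = {a::real..}"
proof auto
  fix x k assume "a \<le> x"
  then show "a - c / (1 + real k) < x"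
    using \<open>c > 0\<close> by (smt (verit) divide_pos_pos of_nat_0_le_iff)
next
  fix x assume h: "\<forall>k. a - c / (1 + real k) < x"
  show "a \<le> x"
  proof (rule ccontr)
    assume "\<not> a \<le> x"
    then obtain k where "inverse (real (Suc k)) < (a - x) / c"
      using reals_Archimedean \<open>c > 0\<close> by (metis diff_gt_0_iff_gt divide_pos_pos not_le)
    with h[rule_format, of k] \<open>c > 0\<close> show False by (simp add: field_simps)
  qed
qed

lemma upset_real_cases:
  fixes U :: "real set"
  assumes up: "\<And>u v. u \<in> U \<Longrightarrow> u \<le> v \<Longrightarrow> v \<in> U" and "U \<noteq> {}" "U \<noteq> UNIV"
  obtains a where "U = {a<..}" | a where "U = {a..}"
proof -
  obtain z where z: "z \<notin> U" using \<open>U \<noteq> UNIV\<close> by blast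
  have "z < u" if "u \<in> U" for u
    using up[OF that, of z] z by force
  then have bdd: "bdd_below U" by (auto simp: bdd_below_def intro: less_imp_le)
  define a where "a = Inf U"
  have ge: "a \<le> u" if "u \<in> U" for u using cInf_lower[OF that bdd] a_def by simp
  have gt: "x \<in> U" if "a < x" for x
  proof -
    from that have "Inf U < x" by (simp add: a_def)
    then obtain u where "u \<in> U" "u < x" using cInf_less_iff[OF \<open>U \<noteq> {}\<close> bdd] by auto
    then show ?thesis using up by auto
  qed
  show thesis
  proof (cases "a \<in> U")
    case False
    have "x \<in> U \<longleftrightarrow> a < x" for x
      using ge[of x] gt[of x] False by (cases "x = a") (auto simp: less_le)
    then have "U = {a<..}" by auto
    then show thesis by (rule that(1))
  next
    case True
    have "x \<in> U \<longleftrightarrow> a \<le> x" for x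
      using ge[of x] gt[of x] True by (cases "x = a") (auto simp: le_less)
    then have "U = {a..}" by auto
    then show thesis by (rule that(2))
  qed
qed

lemma st_le_measure_upset:
  fixes \<mu> \<nu> :: "real measure"
  assumes "prob_space \<mu>" "prob_space \<nu>" and sets_\<mu>: "sets \<mu> = sets borel" and sets_\<nu>: "sets \<nu> = sets borel"
    and st: "st_le \<mu> \<nu>" and U: "U \<in> sets borel" and up: "\<And>u v. u \<in> U \<Longrightarrow> u \<le> v \<Longrightarrow> v \<in> U"
  shows "measure \<mu> U \<le> measure \<nu> U"
proof -
  interpret A: prob_space \<mu> by fact
  interpret B: prob_space \<nu> by fact
  have open_half: "measure \<mu> {t<..} \<le> measure \<nu> {t<..}" for t
    using st unfolding st_le_def by auto
  have closed_half: "measure \<mu> {a..} \<le> measure \<nu> {a..}" for a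
  proof -
    define S where "S k = {a - 1 / real (Suc k) <..}" for k
    have dec: "decseq S" unfolding S_def by (rule decseq_SucI) (auto simp: frac_le)
    have "(\<lambda>k. measure \<nu> (S k)) \<longlonglongrightarrow> measure \<nu> (\<Inter>k. S k)"
      by (intro Lim_measure_decseq dec) (auto simp: S_def sets_\<nu>)
    then have lim: "(\<lambda>k. measure \<nu> (S k)) \<longlonglongrightarrow> measure \<nu> {a..}"
      unfolding S_def Inter_greaterThan_shrink[OF zero_less_one] .
    have "measure \<mu> {a..} \<le> measure \<mu> (S k)" for k
      by (intro A.finite_measure_mono) (auto simp: S_def sets_\<mu> intro: order.strict_trans2[rotated])
    also have "measure \<mu> (S k) \<le> measure \<nu> (S k)" for k unfolding S_def by (rule open_half)
    finally show ?thesis by (intro LIMSEQ_le_const[OF lim]) auto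
  qed
  consider "U = {}" | "U = UNIV" | a where "U = {a<..}" | a where "U = {a..}"
    using upset_real_cases[of U] up by blast
  then show ?thesis
  proof cases
    case 2
    have "space \<mu> = UNIV" "space \<nu> = UNIV"
      using sets_eq_imp_space_eq[OF sets_\<mu>] sets_eq_imp_space_eq[OF sets_\<nu>] by simp_all
    with 2 show ?thesis using A.prob_space B.prob_space by simp
  qed (use open_half closed_half in simp_all)
qed

lemma antimono_borel_measurable: "antimono (h :: real \<Rightarrow> real) \<Longrightarrow> h \<in> borel_measurable borel"
proof -
  assume "antimono h"
  then have "(\<lambda>u. - h u) \<in> borel_measurable borel"
    by (intro borel_measurable_mono) (auto simp: mono_def antimono_def)
  then have "(\<lambda>u. - (- h u)) \<in> borel_measurable borel" by measurable
  then show ?thesis by simp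
qed

lemma nn_integral_layer_cake:
  fixes \<mu> :: "real measure" and h :: "real \<Rightarrow> real"
  assumes sets_\<mu>: "sets \<mu> = sets borel" and "sigma_finite_measure \<mu>"
    and [measurable]: "h \<in> borel_measurable borel" and h_nonneg: "\<And>y. 0 \<le> h y"
  shows "(\<integral>\<^sup>+y. ennreal (h y) \<partial>\<mu>) = (\<integral>\<^sup>+u. indicator {0<..} u * emeasure \<mu> {y. u < h y} \<partial>lborel)"
proof -
  interpret sigma_finite_measure \<mu> by fact
  interpret pair_sigma_finite lborel \<mu> by unfold_locales
  define G :: "real \<times> real \<Rightarrow> ennreal"
    where "G p = indicator {0<..} (fst p) * indicator {q. fst q < h (snd q)} p" for p
  have "G \<in> borel_measurable (lborel \<Otimes>\<^sub>M borel)" unfolding G_def by measurable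
  then have G_meas: "G \<in> borel_measurable (lborel \<Otimes>\<^sub>M \<mu>)"
    by (subst measurable_cong_sets[OF sets_pair_measure_cong[OF refl sets_\<mu>] refl])
  have "(\<integral>\<^sup>+y. ennreal (h y) \<partial>\<mu>) = (\<integral>\<^sup>+y. (\<integral>\<^sup>+u. G (u, y) \<partial>lborel) \<partial>\<mu>)"
  proof (intro nn_integral_cong)
    fix y
    have "(\<integral>\<^sup>+u. G (u, y) \<partial>lborel) = (\<integral>\<^sup>+u. indicator {0<..<h y} u \<partial>lborel)"
      by (intro nn_integral_cong) (auto simp: G_def split: split_indicator)
    then show "ennreal (h y) = (\<integral>\<^sup>+u. G (u, y) \<partial>lborel)" using h_nonneg[of y] by simp
  qed
  also have "\<dots> = (\<integral>\<^sup>+u. (\<integral>\<^sup>+y. G (u, y) \<partial>\<mu>) \<partial>lborel)"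
    by (rule Fubini[OF G_meas])
  also have "\<dots> = (\<integral>\<^sup>+u. indicator {0<..} u * emeasure \<mu> {y. u < h y} \<partial>lborel)"
  proof (intro nn_integral_cong)
    fix u
    have "{y. u < h y} \<in> sets \<mu>" unfolding sets_\<mu> by measurable
    then have "(\<integral>\<^sup>+y. indicator {0<..} u * indicator {y. u < h y} y \<partial>\<mu>)
        = indicator {0<..} u * emeasure \<mu> {y. u < h y}"
      by (rule nn_integral_cmult_indicator)
    then show "(\<integral>\<^sup>+y. G (u, y) \<partial>\<mu>) = indicator {0<..} u * emeasure \<mu> {y. u < h y}"
      by (simp add: G_def indicator_def)
  qed
  finally show ?thesis .
qed

text \<open>If \<open>\<mu>\<close> is stochastically smaller than \<open>\<nu>\<close>, then every nonnegative antitone function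
  has a larger mean under \<open>\<mu>\<close>: the superlevel sets of such a function are down-sets.\<close>

lemma st_le_nn_integral_antimono:
  fixes \<mu> \<nu> :: "real measure" and h :: "real \<Rightarrow> real"
  assumes "prob_space \<mu>" "prob_space \<nu>" and sets_\<mu>: "sets \<mu> = sets borel" and sets_\<nu>: "sets \<nu> = sets borel"
    and st: "st_le \<mu> \<nu>" and anti: "antimono h" and h_nonneg: "\<And>y. 0 \<le> h y"
  shows "(\<integral>\<^sup>+y. ennreal (h y) \<partial>\<nu>) \<le> (\<integral>\<^sup>+y. ennreal (h y) \<partial>\<mu>)"
proof -
  interpret A: prob_space \<mu> by fact
  interpret B: prob_space \<nu> by fact
  have [measurable]: "h \<in> borel_measurable borel" by (rule antimono_borel_measurable[OF anti])
  have superlevel_le: "emeasure \<nu> {y. u < h y} \<le> emeasure \<mu> {y. u < h y}" for u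
  proof -
    let ?U = "- {y. u < h y}"
    have up: "w \<in> ?U" if "v \<in> ?U" "v \<le> w" for v w
      using that anti by (auto simp: antimono_def) (meson order.strict_trans2)
    have "measure \<mu> ?U \<le> measure \<nu> ?U"
      by (rule st_le_measure_upset[OF assms(1-5) _ up]) measurable
    moreover have "{y. u < h y} \<in> sets borel" by measurable
    ultimately have "measure \<nu> {y. u < h y} \<le> measure \<mu> {y. u < h y}"
      using A.prob_compl[of "{y. u < h y}"] B.prob_compl[of "{y. u < h y}"]
        sets_eq_imp_space_eq[OF sets_\<mu>] sets_eq_imp_space_eq[OF sets_\<nu>]
      by (simp add: sets_\<mu> sets_\<nu> Compl_eq_Diff_UNIV)
    then show ?thesis by (simp add: A.emeasure_eq_measure B.emeasure_eq_measure)
  qed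
  have "(\<integral>\<^sup>+y. ennreal (h y) \<partial>\<nu>) = (\<integral>\<^sup>+u. indicator {0<..} u * emeasure \<nu> {y. u < h y} \<partial>lborel)"
    by (rule nn_integral_layer_cake[OF sets_\<nu> B.sigma_finite_measure_axioms _ h_nonneg]) simp
  also have "\<dots> \<le> (\<integral>\<^sup>+u. indicator {0<..} u * emeasure \<mu> {y. u < h y} \<partial>lborel)"
    by (intro nn_integral_mono mult_left_mono superlevel_le) auto
  also have "\<dots> = (\<integral>\<^sup>+y. ennreal (h y) \<partial>\<mu>)"
    by (rule nn_integral_layer_cake[OF sets_\<mu> A.sigma_finite_measure_axioms _ h_nonneg, symmetric]) simp
  finally show ?thesis .
qed

lemma nn_integral_square_le_ratio:
  fixes a k :: "'a \<Rightarrow> real"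
  assumes [measurable]: "a \<in> borel_measurable M" "k \<in> borel_measurable M"
    and bounds: "\<And>\<omega>. \<omega> \<in> space M \<Longrightarrow> 0 \<le> k \<omega> \<and> k \<omega> \<le> a \<omega>"
  shows "(\<integral>\<^sup>+\<omega>. ennreal (k \<omega>) \<partial>M)\<^sup>2
           \<le> (\<integral>\<^sup>+\<omega>. ennreal (a \<omega>) \<partial>M) * (\<integral>\<^sup>+\<omega>. ennreal (k \<omega> * k \<omega> / a \<omega>) \<partial>M)"
proof -
  define f where "f \<omega> = ennreal (sqrt (a \<omega>))" for \<omega>
  define g where "g \<omega> = ennreal (k \<omega> / sqrt (a \<omega>))" for \<omega>
  have "(\<integral>\<^sup>+\<omega>. f \<omega> * g \<omega> \<partial>M)\<^sup>2 \<le> (\<integral>\<^sup>+\<omega>. f \<omega> ^ 2 \<partial>M) * (\<integral>\<^sup>+\<omega>. g \<omega> ^ 2 \<partial>M)"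
    by (rule Cauchy_Schwarz_nn_integral) (simp_all add: f_def g_def)
  moreover have "f \<omega> * g \<omega> = ennreal (k \<omega>)" "f \<omega> ^ 2 = ennreal (a \<omega>)"
    "g \<omega> ^ 2 = ennreal (k \<omega> * k \<omega> / a \<omega>)" if "\<omega> \<in> space M" for \<omega>
    using bounds[OF that]
    by (auto simp: f_def g_def ennreal_mult' ennreal_power power2_eq_square simp flip: ennreal_mult)
  ultimately show ?thesis
    by (simp cong: nn_integral_cong)
qed

lemma const_over_Suc_tendsto_0: "(\<lambda>k. c / real (Suc k)) \<longlonglongrightarrow> (0::real)"
  by (metis (lifting) ext filterlim_sequentially_Suc lim_const_over_n)

text \<open>The DFR property of the survival function passes to \<open>tail\<close> by left limits, and yields
  the log-supermodularity \<open>tail(s+x) tail(s+y) \<le> tail s tail(s+x+y)\<close> for \<open>s, x, y \<ge> 0\<close>.\<close>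

locale dfr_lifetime = prob_space M
  for M :: "'a measure" +
  fixes T :: "'a \<Rightarrow> real"
  assumes T_rv[measurable]: "T \<in> borel_measurable M"
    and T_nonneg: "\<And>\<omega>. \<omega> \<in> space M \<Longrightarrow> T \<omega> \<ge> 0"
    and dfr: "DFR M T"
begin

definition tail :: "real \<Rightarrow> real" where "tail u = prob {\<omega>\<in>space M. u \<le> T \<omega>}"

abbreviation F :: "real \<Rightarrow> real" where "F \<equiv> survival M T"

lemma survival_eq: "F t = prob {\<omega>\<in>space M. t < T \<omega>}"
  by (simp add: survival_def)

lemma survival_antimono: "a \<le> b \<Longrightarrow> F b \<le> F a"
  unfolding survival_eq by (intro finite_measure_mono) auto

lemma survival_nonneg: "0 \<le> F t" and survival_le_1: "F t \<le> 1"
  by (simp_all add: survival_eq)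

text \<open>DFR in cross-multiplied form, valid also where the survival function vanishes.\<close>

lemma survival_cross:
  assumes "0 \<le> t1" "t1 \<le> t2" "0 \<le> z"
  shows "F (t1 + z) * F t2 \<le> F (t2 + z) * F t1"
proof (cases "F t2 > 0")
  case True
  have "F t1 \<ge> F t2" using survival_antimono assms by auto
  with True have pos: "F t1 > 0" by auto
  have "mono_on {t. 0 \<le> t \<and> F t > 0} (\<lambda>t. F (z + t) / F t)"
    using dfr assms unfolding DFR_def by auto
  then have "F (z + t1) / F t1 \<le> F (z + t2) / F t2"
    using assms True pos by (auto simp: mono_on_def)
  with True pos show ?thesis by (simp add: field_simps add.commute)
next
  case False
  then have "F t2 = 0" using survival_nonneg[of t2] by auto
  then show ?thesis using survival_nonneg by simp
qed

lemma survival_tendsto_tail: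
  assumes c: "c > 0"
  shows "(\<lambda>k. F (u - c / real (Suc k))) \<longlonglongrightarrow> tail u"
proof -
  define A where "A k = {\<omega>\<in>space M. u - c / real (Suc k) < T \<omega>}" for k
  have dec: "decseq A"
  proof (rule decseq_SucI)
    fix k have "c / real (Suc (Suc k)) \<le> c / real (Suc k)" using c
      by (intro divide_left_mono) auto
    then show "A (Suc k) \<subseteq> A k" unfolding A_def by auto
  qed
  have "(\<lambda>k. prob (A k)) \<longlonglongrightarrow> prob (\<Inter>k. A k)"
    by (intro finite_Lim_measure_decseq dec) (auto simp: A_def)
  moreover have "(\<Inter>k. A k) = {\<omega>\<in>space M. u \<le> T \<omega>}"
    using Inter_greaterThan_shrink[OF c, of u] by (auto simp: A_def set_eq_iff)
  ultimately show ?thesis unfolding A_def tail_def survival_eq by simp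
qed

lemma tail_antimono: "a \<le> b \<Longrightarrow> tail b \<le> tail a"
  unfolding tail_def by (intro finite_measure_mono) auto

lemma tail_nonneg: "0 \<le> tail t"
  by (simp add: tail_def)

lemma tail_nonpos: "u \<le> 0 \<Longrightarrow> tail u = 1"
proof -
  assume "u \<le> 0"
  then have "{\<omega>\<in>space M. u \<le> T \<omega>} = space M" using T_nonneg by (auto intro: order_trans)
  then show ?thesis unfolding tail_def by (simp add: prob_space)
qed

lemma tail_measurable[measurable]: "tail \<in> borel_measurable borel"
  by (rule antimono_borel_measurable) (auto simp: antimono_def tail_antimono)

text \<open>Away from the origin: approximate \<open>tail\<close> from the left by \<open>F\<close>, to which DFR applies at
  the positive point \<open>s - e\<close>.\<close>

lemma tail_log_supermodular_pos:
  assumes s: "0 < s" and x: "0 \<le> x" and y: "0 \<le> y"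
  shows "tail (s + x) * tail (s + y) \<le> tail s * tail (s + x + y)"
proof -
  let ?e = "\<lambda>k. 1 / real (Suc k)"
  have "eventually (\<lambda>k. ?e k < s) sequentially"
    using order_tendstoD(2)[OF const_over_Suc_tendsto_0 s] .
  then have "eventually (\<lambda>k. F (s + x - ?e k) * F (s + y - ?e k)
                               \<le> F (s - ?e k) * F (s + x + y - ?e k)) sequentially"
  proof eventually_elim
    case (elim k)
    have "F ((s - ?e k) + y) * F (s + x - ?e k) \<le> F ((s + x - ?e k) + y) * F (s - ?e k)"
      using elim x y by (intro survival_cross) auto
    then show ?case by (simp add: algebra_simps)
  qed
  moreover have "(\<lambda>k. F (s + x - ?e k) * F (s + y - ?e k)) \<longlonglongrightarrow> tail (s + x) * tail (s + y)"
    by (intro tendsto_mult survival_tendsto_tail) auto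
  moreover have "(\<lambda>k. F (s - ?e k) * F (s + x + y - ?e k)) \<longlonglongrightarrow> tail s * tail (s + x + y)"
    by (intro tendsto_mult survival_tendsto_tail) auto
  ultimately show ?thesis by (intro tendsto_le[OF trivial_limit_sequentially]) auto
qed

text \<open>DFR compares \<open>F\<close>
  at \<open>0\<close> and at \<open>x - e\<close>, with \<open>e\<close> shrinking to \<open>0\<close>.\<close>

lemma tail_supermultiplicative:
  assumes x: "0 < x" and y: "0 < y"
  shows "tail x * tail y \<le> tail (x + y)"
proof -
  let ?e = "\<lambda>k. (1/2) / real (Suc k)"
  have "eventually (\<lambda>k. ?e k < min x y) sequentially"
    using order_tendstoD(2)[OF const_over_Suc_tendsto_0[of "1/2"], of "min x y"] x y by auto
  then have "eventually (\<lambda>k. F (x - ?e k) * F (y - ?e k) \<le> F (x + y - 1 / real (Suc k))) sequentially"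
  proof eventually_elim
    case (elim k)
    have "F (0 + (y - ?e k)) * F (x - ?e k) \<le> F ((x - ?e k) + (y - ?e k)) * F 0"
      using elim by (intro survival_cross) auto
    also have "\<dots> \<le> F ((x - ?e k) + (y - ?e k))"
      using survival_le_1[of 0] survival_nonneg[of "(x - ?e k) + (y - ?e k)"]
      by (simp add: mult_left_le)
    also have "(x - ?e k) + (y - ?e k) = x + y - 1 / real (Suc k)"
      using add_divide_distrib[of "1/2" "1/2" "real (Suc k)"] by simp
    finally show ?case by (simp add: mult.commute)
  qed
  moreover have "(\<lambda>k. F (x - ?e k) * F (y - ?e k)) \<longlonglongrightarrow> tail x * tail y"
    by (intro tendsto_mult survival_tendsto_tail) auto
  moreover have "(\<lambda>k. F (x + y - 1 / real (Suc k))) \<longlonglongrightarrow> tail (x + y)"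
    by (intro survival_tendsto_tail) auto
  ultimately show ?thesis
    by (intro tendsto_le[OF trivial_limit_sequentially]) auto
qed

lemma tail_log_supermodular:
  assumes s: "0 \<le> s" and x: "0 \<le> x" and y: "0 \<le> y"
  shows "tail (s + x) * tail (s + y) \<le> tail s * tail (s + x + y)"
proof -
  consider "x = 0" | "y = 0" | "x > 0" "y > 0" "s > 0" | "x > 0" "y > 0" "s = 0"
    using s x y by linarith
  then show ?thesis
  proof cases
    case 3 then show ?thesis using tail_log_supermodular_pos x y by blast
  next
    case 4 then show ?thesis using tail_supermultiplicative tail_nonpos[of 0] by simp
  qed (simp_all add: mult.commute)
qed

text \<open>This combines log-supermodularity
  of \<open>tail\<close> with the stochastic order.\<close>

lemma tail_shift_st_le:
  assumes c: "0 \<le> c" and a: "0 \<le> a"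
    and \<mu>: "prob_space \<mu>" "sets \<mu> = sets borel" and \<nu>: "prob_space \<nu>" "sets \<nu> = sets borel"
    and st: "st_le \<mu> \<nu>" and \<nu>_nonneg: "AE y in \<nu>. 0 \<le> y"
  shows "ennreal (tail (c + a)) * (\<integral>\<^sup>+y. ennreal (tail (c + y)) \<partial>\<nu>)
           \<le> ennreal (tail c) * (\<integral>\<^sup>+y. ennreal (tail (c + a + y)) \<partial>\<mu>)"
proof -
  have "ennreal (tail (c + a)) * (\<integral>\<^sup>+y. ennreal (tail (c + y)) \<partial>\<nu>)
      = (\<integral>\<^sup>+y. ennreal (tail (c + a)) * ennreal (tail (c + y)) \<partial>\<nu>)"
    by (rule nn_integral_cmult[symmetric]) (simp add: \<nu> cong: measurable_cong_sets)
  also have "\<dots> \<le> (\<integral>\<^sup>+y. ennreal (tail c) * ennreal (tail (c + a + y)) \<partial>\<nu>)"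
    using \<nu>_nonneg
  proof (rule nn_integral_mono_AE[OF AE_mp], intro AE_I2 impI)
    fix y :: real assume "0 \<le> y"
    then have "tail (c + a) * tail (c + y) \<le> tail c * tail (c + a + y)"
      by (rule tail_log_supermodular[OF c a])
    then show "ennreal (tail (c + a)) * ennreal (tail (c + y)) \<le> ennreal (tail c) * ennreal (tail (c + a + y))"
      by (simp add: ennreal_mult[symmetric] tail_nonneg)
  qed
  also have "\<dots> = ennreal (tail c) * (\<integral>\<^sup>+y. ennreal (tail (c + a + y)) \<partial>\<nu>)"
    by (rule nn_integral_cmult) (simp add: \<nu> cong: measurable_cong_sets)
  also have "\<dots> \<le> ennreal (tail c) * (\<integral>\<^sup>+y. ennreal (tail (c + a + y)) \<partial>\<mu>)"
    by (intro mult_left_mono st_le_nn_integral_antimono[OF \<mu>(1) \<nu>(1) \<mu>(2) \<nu>(2) st])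
       (auto simp: antimono_def tail_nonneg intro: tail_antimono)
  finally show ?thesis .
qed

end

definition ssum :: "nat \<Rightarrow> (nat \<Rightarrow> real) \<Rightarrow> real" where "ssum n x = (\<Sum>i\<in>{1..n}. x i)"

lemma ssum_measurable[measurable]: "ssum n \<in> borel_measurable (vecM n)"
  unfolding ssum_def by measurable

lemma ssum_Suc: "ssum (Suc n) x = ssum n (restrict x {1..n}) + x (Suc n)"
  unfolding ssum_def by (simp add: sum.cl_ivl_Suc)

locale renewal_setup = dfr_lifetime M T
  for M :: "'a measure" and T :: "'a \<Rightarrow> real" +
  fixes X :: "nat \<Rightarrow> 'a \<Rightarrow> real"
  assumes X_rv: "\<And>k. k \<ge> 1 \<Longrightarrow> X k \<in> borel_measurable M"
    and X_nonneg: "\<And>k \<omega>. k \<ge> 1 \<Longrightarrow> \<omega> \<in> space M \<Longrightarrow> X k \<omega> \<ge> 0"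
    and indep: "indep_set
                  {T -` A \<inter> space M | A. A \<in> sets borel}
                  {(\<lambda>\<omega>. \<lambda>k\<in>{1::nat..}. X k \<omega>) -` A \<inter> space M | A.
                      A \<in> sets (Pi\<^sub>M {1::nat..} (\<lambda>_. borel :: real measure))}"
begin

lemma X_Suc_measurable[measurable]: "X (Suc n) \<in> borel_measurable M"
  by (rule X_rv) simp

lemma first_n_measurable[measurable]: "first_n X m \<in> measurable M (vecM m)"
  unfolding first_n_def by (intro measurable_restrict) (auto intro: X_rv)

lemma restrict_first_n: "restrict (first_n X (Suc n) \<omega>) {1..n} = first_n X n \<omega>"
  by (auto simp: first_n_def restrict_def fun_eq_iff)

lemma first_n_event_in_sequence_events:
  assumes A: "A \<in> sets (vecM m)"
  shows "first_n X m -` A \<inter> space M \<in> {(\<lambda>\<omega>. \<lambda>k\<in>{1::nat..}. X k \<omega>) -` A \<inter> space M | A.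
                      A \<in> sets (Pi\<^sub>M {1::nat..} (\<lambda>_. borel :: real measure))}"
proof -
  define A' where "A' = (\<lambda>f. restrict f {1..m}) -` A \<inter> space (Pi\<^sub>M {1::nat..} (\<lambda>_. borel :: real measure))"
  have "A' \<in> sets (Pi\<^sub>M {1::nat..} (\<lambda>_. borel :: real measure))"
    unfolding A'_def using A by (intro measurable_sets[OF measurable_restrict_subset]) auto
  moreover have "(\<lambda>\<omega>. \<lambda>k\<in>{1::nat..}. X k \<omega>) -` A' \<inter> space M = first_n X m -` A \<inter> space M"
  proof -
    have "restrict (\<lambda>k\<in>{1::nat..}. X k \<omega>) {1..m} = first_n X m \<omega>" for \<omega>
      by (auto simp: first_n_def restrict_def fun_eq_iff)
    then show ?thesis unfolding A'_def by (auto simp: space_PiM)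
  qed
  ultimately show ?thesis by blast
qed

lemma distr_T_first_n:
  "distr M (borel \<Otimes>\<^sub>M vecM m) (\<lambda>\<omega>. (T \<omega>, first_n X m \<omega>))
     = distr M borel T \<Otimes>\<^sub>M distr M (vecM m) (first_n X m)"
proof (rule pair_measure_eqI[symmetric])
  show "sigma_finite_measure (distr M borel T)" "sigma_finite_measure (distr M (vecM m) (first_n X m))"
    by (simp_all add: prob_space_distr prob_space_imp_sigma_finite)
  fix A B assume A: "A \<in> sets (distr M borel T)" and B: "B \<in> sets (distr M (vecM m) (first_n X m))"
  have "T -` A \<inter> space M \<in> {T -` A \<inter> space M | A. A \<in> sets borel}" using A by auto
  moreover have "first_n X m -` B \<inter> space M \<in> {(\<lambda>\<omega>. \<lambda>k\<in>{1::nat..}. X k \<omega>) -` A \<inter> space M | A.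
                      A \<in> sets (Pi\<^sub>M {1::nat..} (\<lambda>_. borel :: real measure))}"
    using first_n_event_in_sequence_events[of B m] B by simp
  ultimately have "prob ((T -` A \<inter> space M) \<inter> (first_n X m -` B \<inter> space M))
      = prob (T -` A \<inter> space M) * prob (first_n X m -` B \<inter> space M)"
    using indep unfolding indep_sets2_eq by blast
  moreover have "(\<lambda>\<omega>. (T \<omega>, first_n X m \<omega>)) -` (A \<times> B) \<inter> space M
      = (T -` A \<inter> space M) \<inter> (first_n X m -` B \<inter> space M)"
    by auto
  ultimately show "emeasure (distr M borel T) A * emeasure (distr M (vecM m) (first_n X m)) B =
         emeasure (distr M (borel \<Otimes>\<^sub>M vecM m) (\<lambda>\<omega>. (T \<omega>, first_n X m \<omega>))) (A \<times> B)"
    using A B by (simp add: emeasure_distr emeasure_eq_measure ennreal_mult')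
qed simp

lemma emeasure_le_T_eq_nn_integral_tail:
  assumes [measurable]: "\<xi> \<in> borel_measurable (vecM m)"
  shows "emeasure M {\<omega>\<in>space M. \<xi> (first_n X m \<omega>) \<le> T \<omega>}
       = (\<integral>\<^sup>+\<omega>. ennreal (tail (\<xi> (first_n X m \<omega>))) \<partial>M)"
proof -
  let ?Y = "first_n X m"
  let ?PT = "distr M borel T" and ?PY = "distr M (vecM m) ?Y"
  interpret PT: prob_space ?PT by (rule prob_space_distr) simp
  interpret PY: prob_space ?PY by (rule prob_space_distr) simp
  interpret pair_sigma_finite ?PT ?PY by unfold_locales
  define g where "g z = (indicator {p :: real \<times> (nat \<Rightarrow> real). \<xi> (snd p) \<le> fst p} z :: ennreal)" for z
  have g[measurable]: "g \<in> borel_measurable (borel \<Otimes>\<^sub>M vecM m)"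
    unfolding g_def by measurable
  have "emeasure M {\<omega>\<in>space M. \<xi> (?Y \<omega>) \<le> T \<omega>}
      = (\<integral>\<^sup>+\<omega>. indicator {\<omega>\<in>space M. \<xi> (?Y \<omega>) \<le> T \<omega>} \<omega> \<partial>M)"
    by (rule nn_integral_indicator[symmetric]) measurable
  also have "\<dots> = (\<integral>\<^sup>+\<omega>. g (T \<omega>, ?Y \<omega>) \<partial>M)"
    by (intro nn_integral_cong) (auto simp: g_def split: split_indicator)
  also have "\<dots> = (\<integral>\<^sup>+z. g z \<partial>distr M (borel \<Otimes>\<^sub>M vecM m) (\<lambda>\<omega>. (T \<omega>, ?Y \<omega>)))"
    by (rule nn_integral_distr[symmetric]) simp_all
  also have "\<dots> = (\<integral>\<^sup>+y. (\<integral>\<^sup>+t. g (t, y) \<partial>?PT) \<partial>?PY)"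
    unfolding distr_T_first_n by (rule nn_integral_snd[symmetric]) simp
  also have "\<dots> = (\<integral>\<^sup>+y. ennreal (tail (\<xi> y)) \<partial>?PY)"
  proof (intro nn_integral_cong)
    fix y
    have "(\<integral>\<^sup>+t. g (t, y) \<partial>?PT) = (\<integral>\<^sup>+t. indicator {\<xi> y..} t \<partial>?PT)"
      by (intro nn_integral_cong) (auto simp: g_def split: split_indicator)
    also have "\<dots> = emeasure ?PT {\<xi> y..}" by simp
    also have "\<dots> = ennreal (tail (\<xi> y))"
      by (subst emeasure_distr) (auto simp: tail_def emeasure_eq_measure intro!: arg_cong[where f=prob])
    finally show "(\<integral>\<^sup>+t. g (t, y) \<partial>?PT) = ennreal (tail (\<xi> y))" .
  qed
  also have "\<dots> = (\<integral>\<^sup>+\<omega>. ennreal (tail (\<xi> (?Y \<omega>))) \<partial>M)"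
    by (subst nn_integral_distr) auto
  finally show ?thesis .
qed

lemma partial_sum_eq_ssum: "partial_sum X n \<omega> = ssum n (first_n X n \<omega>)"
  unfolding partial_sum_def ssum_def first_n_def by (intro sum.cong) auto

lemma partial_sum_Suc: "partial_sum X (Suc n) \<omega> = partial_sum X n \<omega> + X (Suc n) \<omega>"
  unfolding partial_sum_def by simp

lemma partial_sum_mono: "\<omega> \<in> space M \<Longrightarrow> m \<le> n \<Longrightarrow> partial_sum X m \<omega> \<le> partial_sum X n \<omega>"
  unfolding partial_sum_def by (intro sum_mono2 X_nonneg) auto

lemma partial_sum_measurable[measurable]: "partial_sum X n \<in> borel_measurable M"
  unfolding partial_sum_eq_ssum[abs_def] by measurable

text \<open>Since the partial sums increase, \<open>N(T) \<ge> n\<close> iff \<open>S\<^sub>n \<le> T\<close>.\<close>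

lemma counting_ge_iff:
  assumes \<omega>: "\<omega> \<in> space M"
  shows "enat n \<le> counting X (T \<omega>) \<omega> \<longleftrightarrow> partial_sum X n \<omega> \<le> T \<omega>"
proof
  assume le: "enat n \<le> counting X (T \<omega>) \<omega>"
  show "partial_sum X n \<omega> \<le> T \<omega>"
  proof (cases n)
    case 0 then show ?thesis using T_nonneg[OF \<omega>] by (simp add: partial_sum_def)
  next
    case (Suc m)
    then have "enat m < counting X (T \<omega>) \<omega>" using le by (metis Suc_ile_eq)
    then obtain k where k: "enat m < enat k" "partial_sum X k \<omega> \<le> T \<omega>"
      unfolding counting_def less_Sup_iff by auto
    then have "n \<le> k" using Suc by simp
    then show ?thesis using partial_sum_mono[OF \<omega> \<open>n \<le> k\<close>] k by simp
  qed
next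
  assume "partial_sum X n \<omega> \<le> T \<omega>"
  then show "enat n \<le> counting X (T \<omega>) \<omega>"
    unfolding counting_def by (intro Sup_upper) auto
qed

definition reach :: "nat \<Rightarrow> real" where
  "reach n = prob {\<omega>\<in>space M. partial_sum X n \<omega> \<le> T \<omega>}"

lemma reach_nonneg: "0 \<le> reach n"
  by (simp add: reach_def)

lemma reach_0: "reach 0 = 1"
proof -
  have "{\<omega>\<in>space M. partial_sum X 0 \<omega> \<le> T \<omega>} = space M"
    using T_nonneg by (auto simp: partial_sum_def)
  then show ?thesis by (simp add: reach_def prob_space)
qed

lemma reach_eq_nn_integral_tail: "ennreal (reach n) = (\<integral>\<^sup>+\<omega>. ennreal (tail (partial_sum X n \<omega>)) \<partial>M)"
  using emeasure_le_T_eq_nn_integral_tail[of "ssum n" n]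
  by (simp add: reach_def emeasure_eq_measure partial_sum_eq_ssum)

lemma discrete_DFR_counting_iff:
  "discrete_DFR M (\<lambda>\<omega>. counting X (T \<omega>) \<omega>) \<longleftrightarrow> (\<forall>n. (reach (Suc n))\<^sup>2 \<le> reach n * reach (Suc (Suc n)))"
proof -
  have "{\<omega>\<in>space M. enat k \<le> counting X (T \<omega>) \<omega>} = {\<omega>\<in>space M. partial_sum X k \<omega> \<le> T \<omega>}" for k
    using counting_ge_iff by auto
  then show ?thesis
    unfolding discrete_DFR_def reach_def Suc_eq_plus1 add.assoc one_add_one by (simp only:)
qed

end

lemma emeasure_eq_nonneg_part:
  fixes N :: "real measure"
  assumes sets_N: "sets N = sets borel" and neg: "emeasure N {..<0} = 0" and b: "b \<in> sets borel"
  shows "emeasure N b = emeasure N (b \<inter> {0..})"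
proof -
  have sets: "b \<inter> {0..} \<in> sets N" "b \<inter> {..<0} \<in> sets N" using b by (auto simp: sets_N)
  have "emeasure N (b \<inter> {..<0}) \<le> emeasure N {..<0}"
    by (rule emeasure_mono) (auto simp: sets_N)
  then have "emeasure N (b \<inter> {..<0}) = 0" using neg by simp
  moreover have "(b \<inter> {0..}) \<inter> (b \<inter> {..<0}) = {}" "(b \<inter> {0..}) \<union> (b \<inter> {..<0}) = b" by auto
  then have "emeasure N b = emeasure N (b \<inter> {0..}) + emeasure N (b \<inter> {..<0})"
    using plus_emeasure[OF sets] by simp
  ultimately show ?thesis by simp
qed

locale kernel_level = renewal_setup M T X
  for M :: "'a measure" and T X +
  fixes n :: nat and Nn :: "(nat \<Rightarrow> real) set" and \<mu> :: "(nat \<Rightarrow> real) \<Rightarrow> real measure"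
  assumes Nn_sets[measurable]: "Nn \<in> sets (vecM n)"
    and Nn_prob: "measure M {\<omega>\<in>space M. first_n X n \<omega> \<in> Nn} = 1"
    and reg: "N_reg_cond_dist M X n Nn \<mu>"
begin

abbreviation PY :: "(nat \<Rightarrow> real) measure" where "PY \<equiv> distr M (vecM n) (first_n X n)"

text \<open>The kernel \<open>\<mu>\<close>, extended by a point mass outside \<open>N\<^sub>n\<close> to a Markov kernel on all of \<open>\<real>\<^sup>n\<close>.\<close>

definition kern :: "(nat \<Rightarrow> real) \<Rightarrow> real measure" where
  "kern x = (if x \<in> Nn then \<mu> x else return borel 0)"

lemma \<mu>_prob: "x \<in> Nn \<Longrightarrow> prob_space (\<mu> x)" and \<mu>_sets: "x \<in> Nn \<Longrightarrow> sets (\<mu> x) = sets borel"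
  and \<mu>_neg: "x \<in> Nn \<Longrightarrow> emeasure (\<mu> x) {..<0} = 0"
  using reg unfolding N_reg_cond_dist_def by auto

lemma kern_prob: "prob_space (kern x)" and kern_sets: "sets (kern x) = sets borel"
  and kern_neg: "emeasure (kern x) {..<0} = 0"
  by (auto simp: kern_def \<mu>_prob \<mu>_sets \<mu>_neg prob_space_return emeasure_return)

lemma AE_kern_nonneg: "AE y in kern x. 0 \<le> y"
proof -
  have "AE y in kern x. y \<notin> {..<0::real}"
    using kern_neg[of x] by (intro AE_I[of _ _ "{..<0}"]) (auto simp: kern_sets)
  then show ?thesis by (auto elim: AE_mp)
qed

lemma kern_measurable[measurable]: "kern \<in> measurable (vecM n) (prob_algebra borel)"
proof (rule measurable_prob_algebra_generated[where \<Omega>=UNIV and G="sets borel"])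
  show "sets borel = sigma_sets UNIV (sets (borel :: real measure))"
    using sets.sigma_sets_eq[of "borel :: real measure"] by simp
  show "Int_stable (sets (borel :: real measure))" by (auto simp: Int_stable_def)
  show "sets (borel :: real measure) \<subseteq> Pow UNIV" by simp
  show "prob_space (kern x)" "sets (kern x) = sets borel" for x by (rule kern_prob, rule kern_sets)
next
  fix A :: "real set" assume "A \<in> sets borel"
  then have "(\<lambda>x. emeasure (\<mu> x) A) \<in> borel_measurable (restrict_space (vecM n) Nn)"
    using reg unfolding N_reg_cond_dist_def by auto
  then have "(\<lambda>x. if x \<in> Nn then emeasure (\<mu> x) A else emeasure (return borel 0) A) \<in> borel_measurable (vecM n)"
    by (subst measurable_If_restrict_space_iff) auto
  then show "(\<lambda>x. emeasure (kern x) A) \<in> borel_measurable (vecM n)"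
    by (rule measurable_cong[THEN iffD1, rotated]) (auto simp: kern_def)
qed

lemma AE_first_n_in_Nn: "AE \<omega> in M. first_n X n \<omega> \<in> Nn"
  using AE_prob_1[OF Nn_prob] by auto

lemma AE_PY_in_Nn: "AE x in PY. x \<in> Nn"
  using AE_first_n_in_Nn by (subst AE_distr_iff) auto

text \<open>The disintegration formula on rectangles, extended from \<open>N\<^sub>n \<times> \<real>\<^sub>+\<close> to all of
  \<open>\<real>\<^sup>n \<times> \<real>\<close> using that \<open>(X\<^sub>1,\<dots>,X\<^sub>n) \<in> N\<^sub>n\<close> a.s. and \<open>X\<^sub>n\<^sub>+\<^sub>1 \<ge> 0\<close>.\<close>

lemma emeasure_first_n_next_rectangle:
  assumes a[measurable]: "a \<in> sets (vecM n)" and b[measurable]: "b \<in> sets (borel :: real measure)"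
  shows "emeasure M {\<omega>\<in>space M. first_n X n \<omega> \<in> a \<and> X (Suc n) \<omega> \<in> b}
       = (\<integral>\<^sup>+x. emeasure (kern x) b * indicator a x \<partial>PY)"
proof -
  have "emeasure M {\<omega>\<in>space M. first_n X n \<omega> \<in> a \<and> X (Suc n) \<omega> \<in> b}
      = emeasure M {\<omega>\<in>space M. first_n X n \<omega> \<in> a \<inter> Nn \<and> X (Suc n) \<omega> \<in> b \<inter> {0..}}"
  proof (rule emeasure_eq_AE)
    show "AE \<omega> in M. (\<omega> \<in> {\<omega>\<in>space M. first_n X n \<omega> \<in> a \<and> X (Suc n) \<omega> \<in> b}) =
        (\<omega> \<in> {\<omega>\<in>space M. first_n X n \<omega> \<in> a \<inter> Nn \<and> X (Suc n) \<omega> \<in> b \<inter> {0..}})"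
      using AE_first_n_in_Nn
    proof eventually_elim
      case (elim \<omega>)
      then show ?case using X_nonneg[of "Suc n" \<omega>] by auto
    qed
  qed measurable
  also have "\<dots> = (\<integral>\<^sup>+x. emeasure (\<mu> x) (b \<inter> {0..}) * indicator (a \<inter> Nn) x \<partial>PY)"
  proof -
    have disintegration: "\<forall>A\<in>sets (vecM n). A \<subseteq> Nn \<longrightarrow> (\<forall>B\<in>sets borel. B \<subseteq> {0..} \<longrightarrow>
        emeasure M {\<omega>\<in>space M. first_n X n \<omega> \<in> A \<and> X (Suc n) \<omega> \<in> B}
          = (\<integral>\<^sup>+x. emeasure (\<mu> x) B * indicator A x \<partial>PY))"
      using reg unfolding N_reg_cond_dist_def by (elim conjE)
    have "a \<inter> Nn \<in> sets (vecM n)" "b \<inter> {0..} \<in> sets borel" by measurable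
    then show ?thesis by (intro disintegration[rule_format]) auto
  qed
  also have "\<dots> = (\<integral>\<^sup>+x. emeasure (kern x) b * indicator a x \<partial>PY)"
  proof (rule nn_integral_cong_AE)
    show "AE x in PY. emeasure (\<mu> x) (b \<inter> {0..}) * indicator (a \<inter> Nn) x = emeasure (kern x) b * indicator a x"
      using AE_PY_in_Nn
    proof eventually_elim
      case (elim x)
      then have "emeasure (kern x) b = emeasure (\<mu> x) (b \<inter> {0..})"
        using emeasure_eq_nonneg_part[OF \<mu>_sets \<mu>_neg b] by (simp add: kern_def)
      with elim show ?case by (simp split: split_indicator)
    qed
  qed
  finally show ?thesis .
qed

definition pair_kern :: "(nat \<Rightarrow> real) \<Rightarrow> ((nat \<Rightarrow> real) \<times> real) measure" where
  "pair_kern x = distr (kern x) (vecM n \<Otimes>\<^sub>M borel) (\<lambda>y. (x, y))"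

lemma pair_kern_measurable: "pair_kern \<in> measurable PY (subprob_algebra (vecM n \<Otimes>\<^sub>M borel))"
  unfolding pair_kern_def
  by (simp cong: measurable_cong_sets, rule measurable_distr2[where M=borel])
     (auto intro: measurable_prob_algebraD[OF kern_measurable])

lemma emeasure_pair_kern_rectangle:
  assumes x: "x \<in> space (vecM n)" and "a \<in> sets (vecM n)" and "b \<in> sets (borel :: real measure)"
  shows "emeasure (pair_kern x) (a \<times> b) = emeasure (kern x) b * indicator a x"
proof -
  have "(\<lambda>y. (x, y)) \<in> measurable (kern x) (vecM n \<Otimes>\<^sub>M borel)"
    using x by (subst measurable_cong_sets[OF kern_sets refl]) auto
  then show ?thesis
    unfolding pair_kern_def using assms
    by (subst emeasure_distr) (auto simp: kern_sets split: split_indicator)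
qed

lemma distr_first_n_next_eq_bind:
  "distr M (vecM n \<Otimes>\<^sub>M borel) (\<lambda>\<omega>. (first_n X n \<omega>, X (Suc n) \<omega>)) = PY \<bind> pair_kern"
  (is "?D = _")
proof -
  have PY_nonempty: "space PY \<noteq> {}"
    using prob_space_distr[OF first_n_measurable[of n]] prob_space.not_empty by blast
  let ?E = "{a \<times> b | a b. a \<in> sets (vecM n) \<and> b \<in> sets (borel :: real measure)}"
  let ?\<Omega> = "space (vecM n) \<times> (UNIV :: real set)"
  show ?thesis
  proof (rule measure_eqI_generator_eq[where E="?E" and \<Omega>="?\<Omega>" and A="\<lambda>_. ?\<Omega>"])
    show "Int_stable ?E" by (rule Int_stable_pair_measure_generator)
    show "?E \<subseteq> Pow ?\<Omega>" using sets.sets_into_space by fastforce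
    show "sets ?D = sigma_sets ?\<Omega> ?E" by (simp add: sets_pair_measure)
    show "sets (PY \<bind> pair_kern) = sigma_sets ?\<Omega> ?E"
      using sets_bind_measurable[OF pair_kern_measurable PY_nonempty] by (simp add: sets_pair_measure)
    have "space (vecM n) \<in> sets (vecM n)" "(UNIV :: real set) \<in> sets borel" by simp_all
    then show "range (\<lambda>_. ?\<Omega>) \<subseteq> ?E" by blast
    show "(\<Union>i. ?\<Omega>) = ?\<Omega>" by simp
    have "prob_space ?D" by (rule prob_space_distr) simp
    then show "emeasure ?D ?\<Omega> \<noteq> \<infinity>"
      using prob_space.emeasure_space_1 by (fastforce simp: space_pair_measure)
  next
    fix C assume "C \<in> ?E"
    then obtain a b where C: "C = a \<times> b" and a[measurable]: "a \<in> sets (vecM n)"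
      and b[measurable]: "b \<in> sets (borel :: real measure)"
      by auto
    have "emeasure ?D C = emeasure M {\<omega>\<in>space M. first_n X n \<omega> \<in> a \<and> X (Suc n) \<omega> \<in> b}"
      unfolding C by (subst emeasure_distr) (auto intro!: arg_cong[where f="emeasure M"])
    also have "\<dots> = (\<integral>\<^sup>+x. emeasure (kern x) b * indicator a x \<partial>PY)"
      by (rule emeasure_first_n_next_rectangle) fact+
    also have "\<dots> = (\<integral>\<^sup>+x. emeasure (pair_kern x) C \<partial>PY)"
      unfolding C by (intro nn_integral_cong) (simp add: emeasure_pair_kern_rectangle)
    also have "\<dots> = emeasure (PY \<bind> pair_kern) C"
      using a b by (intro emeasure_bind[symmetric, OF PY_nonempty pair_kern_measurable]) (auto simp: C)
    finally show "emeasure ?D C = emeasure (PY \<bind> pair_kern) C" .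
  qed
qed

lemma nn_integral_disintegration:
  assumes f[measurable]: "f \<in> borel_measurable (vecM n \<Otimes>\<^sub>M borel)"
  shows "(\<integral>\<^sup>+\<omega>. f (first_n X n \<omega>, X (Suc n) \<omega>) \<partial>M) = (\<integral>\<^sup>+x. (\<integral>\<^sup>+y. f (x, y) \<partial>kern x) \<partial>PY)"
proof -
  have "(\<integral>\<^sup>+\<omega>. f (first_n X n \<omega>, X (Suc n) \<omega>) \<partial>M)
      = (\<integral>\<^sup>+z. f z \<partial>distr M (vecM n \<Otimes>\<^sub>M borel) (\<lambda>\<omega>. (first_n X n \<omega>, X (Suc n) \<omega>)))"
    by (rule nn_integral_distr[symmetric]) simp_all
  also have "\<dots> = (\<integral>\<^sup>+x. (\<integral>\<^sup>+z. f z \<partial>pair_kern x) \<partial>PY)"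
    unfolding distr_first_n_next_eq_bind by (rule nn_integral_bind[OF _ pair_kern_measurable]) simp
  also have "\<dots> = (\<integral>\<^sup>+x. (\<integral>\<^sup>+y. f (x, y) \<partial>kern x) \<partial>PY)"
    unfolding pair_kern_def
    by (intro nn_integral_cong) (subst nn_integral_distr; simp add: kern_sets cong: measurable_cong_sets)
  finally show ?thesis .
qed

end

context kernel_level
begin

text \<open>The conditional tail \<open>cond_tail x = E[tail(s\<^sub>n(x) + X\<^sub>n\<^sub>+\<^sub>1) | (X\<^sub>1,\<dots>,X\<^sub>n) = x]\<close>, computed with the kernel.\<close>

definition cond_tail_enn :: "(nat \<Rightarrow> real) \<Rightarrow> ennreal" where
  "cond_tail_enn x = (\<integral>\<^sup>+y. ennreal (tail (ssum n x + y)) \<partial>kern x)"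

definition cond_tail :: "(nat \<Rightarrow> real) \<Rightarrow> real" where
  "cond_tail x = enn2real (cond_tail_enn x)"

lemma cond_tail_enn_measurable[measurable]: "cond_tail_enn \<in> borel_measurable (vecM n)"
  unfolding cond_tail_enn_def
  by (rule nn_integral_measurable_subprob_algebra2[OF _ measurable_prob_algebraD[OF kern_measurable]])
     measurable

lemma cond_tail_measurable[measurable]: "cond_tail \<in> borel_measurable (vecM n)"
  unfolding cond_tail_def by measurable

text \<open>Since \<open>X\<^sub>n\<^sub>+\<^sub>1 \<ge> 0\<close> and \<open>tail\<close> is antitone, \<open>cond_tail x \<le> tail(s\<^sub>n(x))\<close>.\<close>

lemma cond_tail_enn_le: "cond_tail_enn x \<le> ennreal (tail (ssum n x))"
proof -
  interpret K: prob_space "kern x" by (rule kern_prob)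
  have "cond_tail_enn x \<le> (\<integral>\<^sup>+y. ennreal (tail (ssum n x)) \<partial>kern x)"
    unfolding cond_tail_enn_def
    by (intro nn_integral_mono_AE, rule AE_mp[OF AE_kern_nonneg[of x]])
       (auto intro!: AE_I2 ennreal_leI tail_antimono)
  also have "\<dots> = ennreal (tail (ssum n x))" by (simp add: K.emeasure_space_1)
  finally show ?thesis .
qed

lemma cond_tail_enn_eq: "cond_tail_enn x = ennreal (cond_tail x)"
  using cond_tail_enn_le[of x] unfolding cond_tail_def
  by (simp add: less_top le_less_trans)

lemma cond_tail_nonneg: "0 \<le> cond_tail x"
  by (simp add: cond_tail_def)

lemma cond_tail_le: "cond_tail x \<le> tail (ssum n x)"
  using cond_tail_enn_le[of x] tail_nonneg by (simp add: cond_tail_enn_eq)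

lemma nn_integral_weighted_tail_next:
  assumes w[measurable]: "w \<in> borel_measurable (vecM n)" and w_nonneg: "\<And>x. 0 \<le> w x"
  shows "(\<integral>\<^sup>+\<omega>. ennreal (w (first_n X n \<omega>) * tail (partial_sum X (Suc n) \<omega>)) \<partial>M)
       = (\<integral>\<^sup>+\<omega>. ennreal (w (first_n X n \<omega>) * cond_tail (first_n X n \<omega>)) \<partial>M)"
proof -
  define f where "f p = ennreal (w (fst p) * tail (ssum n (fst p) + snd p))" for p :: "(nat \<Rightarrow> real) \<times> real"
  have f[measurable]: "f \<in> borel_measurable (vecM n \<Otimes>\<^sub>M borel)" unfolding f_def by measurable
  have "(\<integral>\<^sup>+\<omega>. ennreal (w (first_n X n \<omega>) * tail (partial_sum X (Suc n) \<omega>)) \<partial>M)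
      = (\<integral>\<^sup>+\<omega>. f (first_n X n \<omega>, X (Suc n) \<omega>) \<partial>M)"
    by (simp add: f_def partial_sum_Suc partial_sum_eq_ssum[of n])
  also have "\<dots> = (\<integral>\<^sup>+x. (\<integral>\<^sup>+y. f (x, y) \<partial>kern x) \<partial>PY)"
    by (rule nn_integral_disintegration[OF f])
  also have "\<dots> = (\<integral>\<^sup>+x. ennreal (w x * cond_tail x) \<partial>PY)"
  proof (intro nn_integral_cong)
    fix x
    have "(\<integral>\<^sup>+y. f (x, y) \<partial>kern x) = (\<integral>\<^sup>+y. ennreal (w x) * ennreal (tail (ssum n x + y)) \<partial>kern x)"
      by (intro nn_integral_cong) (simp add: f_def ennreal_mult w_nonneg tail_nonneg)
    also have "\<dots> = ennreal (w x) * cond_tail_enn x" unfolding cond_tail_enn_def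
      by (rule nn_integral_cmult) (simp add: kern_sets cong: measurable_cong_sets)
    finally show "(\<integral>\<^sup>+y. f (x, y) \<partial>kern x) = ennreal (w x * cond_tail x)"
      by (simp add: cond_tail_enn_eq ennreal_mult w_nonneg cond_tail_nonneg)
  qed
  also have "\<dots> = (\<integral>\<^sup>+\<omega>. ennreal (w (first_n X n \<omega>) * cond_tail (first_n X n \<omega>)) \<partial>M)"
    by (subst nn_integral_distr) auto
  finally show ?thesis .
qed

lemma reach_Suc_eq_nn_integral_cond_tail:
  "ennreal (reach (Suc n)) = (\<integral>\<^sup>+\<omega>. ennreal (cond_tail (first_n X n \<omega>)) \<partial>M)"
  using reach_eq_nn_integral_tail[of "Suc n"] nn_integral_weighted_tail_next[of "\<lambda>_. 1"] by simp

end

text \<open>Level \<open>1\<close> of hypothesis (c), with \<open>\<mu>\<^sub>1(x) \<le>\<^sub>s\<^sub>t X\<^sub>1\<close> (c.1): it gives \<open>P(N(T) \<ge> 1)\<^sup>2 \<le> P(N(T) \<ge> 2)\<close>.\<close>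

locale first_level = kernel_level M T X 1 N1 m1
  for M :: "'a measure" and T X N1 m1 +
  assumes N1_nonneg: "\<And>x. x \<in> N1 \<Longrightarrow> 0 \<le> x 1"
    and st1: "\<And>x. x \<in> N1 \<Longrightarrow> st_le (m1 x) (distr M borel (X 1))"
begin

lemma X_1_measurable[measurable]: "X 1 \<in> borel_measurable M"
  by (rule X_rv) simp

lemma partial_sum_1: "partial_sum X 1 \<omega> = X 1 \<omega>"
  by (simp add: partial_sum_def)

lemma cond_tail_first_ge:
  assumes x: "x \<in> N1"
  shows "tail (x 1) * reach 1 \<le> cond_tail x"
proof -
  let ?PX = "distr M borel (X 1)"
  have kern_x: "kern x = m1 x" using x by (simp add: kern_def)
  have "ennreal (reach 1) = (\<integral>\<^sup>+y. ennreal (tail (0 + y)) \<partial>?PX)"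
    using reach_eq_nn_integral_tail[of 1] by (simp add: nn_integral_distr partial_sum_1)
  then have "ennreal (tail (x 1) * reach 1) = ennreal (tail (0 + x 1)) * (\<integral>\<^sup>+y. ennreal (tail (0 + y)) \<partial>?PX)"
    by (simp add: ennreal_mult tail_nonneg reach_nonneg)
  also have "\<dots> \<le> ennreal (tail 0) * (\<integral>\<^sup>+y. ennreal (tail (0 + x 1 + y)) \<partial>kern x)"
  proof (rule tail_shift_st_le)
    show "prob_space (kern x)" "sets (kern x) = sets borel" by (rule kern_prob, rule kern_sets)
    show "prob_space ?PX" "sets ?PX = sets borel" by (simp_all add: prob_space_distr)
    show "st_le (kern x) ?PX" using st1[OF x] by (simp add: kern_x)
    show "AE y in ?PX. 0 \<le> y" by (subst AE_distr_iff) (auto intro!: AE_I2 X_nonneg)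
  qed (use N1_nonneg[OF x] in auto)
  also have "\<dots> = ennreal (cond_tail x)"
    by (simp add: tail_nonpos cond_tail_enn_eq[symmetric] cond_tail_enn_def ssum_def)
  finally show ?thesis by (simp add: cond_tail_nonneg)
qed

lemma reach_1_squared_le: "(reach 1)\<^sup>2 \<le> reach 2"
proof -
  have "ennreal ((reach 1)\<^sup>2) = ennreal (reach 1) * (\<integral>\<^sup>+\<omega>. ennreal (tail (X 1 \<omega>)) \<partial>M)"
    using reach_eq_nn_integral_tail[of 1]
    by (simp add: power2_eq_square ennreal_mult reach_nonneg partial_sum_1)
  also have "\<dots> = (\<integral>\<^sup>+\<omega>. ennreal (tail (X 1 \<omega>) * reach 1) \<partial>M)"
    by (subst nn_integral_cmult[symmetric])
       (auto simp: ennreal_mult tail_nonneg reach_nonneg mult.commute)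
  also have "\<dots> \<le> (\<integral>\<^sup>+\<omega>. ennreal (cond_tail (first_n X 1 \<omega>)) \<partial>M)"
    using AE_first_n_in_Nn
  proof (rule nn_integral_mono_AE[OF AE_mp], intro AE_I2 impI)
    fix \<omega> assume "first_n X 1 \<omega> \<in> N1"
    from cond_tail_first_ge[OF this]
    show "ennreal (tail (X 1 \<omega>) * reach 1) \<le> ennreal (cond_tail (first_n X 1 \<omega>))"
      by (simp add: first_n_def ennreal_leI)
  qed
  also have "\<dots> = ennreal (reach 2)"
    using reach_Suc_eq_nn_integral_cond_tail by (simp add: numeral_2_eq_2)
  finally show ?thesis by (simp add: reach_nonneg)
qed

end

text \<open>Two consecutive levels \<open>n, n+1\<close> of hypothesis (c), linked by (c.2); they give
  \<open>P(N(T) \<ge> n+1)\<^sup>2 \<le> P(N(T) \<ge> n) P(N(T) \<ge> n+2)\<close>.\<close>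

locale consecutive_levels = L1: kernel_level M T X n N1 m1 + L2: kernel_level M T X "Suc n" N2 m2
  for M :: "'a measure" and T X n N1 m1 N2 m2 +
  assumes N1_nonneg: "\<And>x i. x \<in> N1 \<Longrightarrow> i \<in> {1..n} \<Longrightarrow> 0 \<le> x i"
    and N2_extends_N1: "\<And>x. x \<in> N2 \<Longrightarrow> restrict x {1..n} \<in> N1 \<and> 0 \<le> x (Suc n)"
    and st_next: "\<And>x. x \<in> N2 \<Longrightarrow> st_le (m2 x) (m1 (restrict x {1..n}))"
begin

lemma cond_tail_ratio_le:
  assumes x': "x' \<in> N2"
  shows "L1.cond_tail (restrict x' {1..n}) / L1.tail (ssum n (restrict x' {1..n})) * L1.tail (ssum (Suc n) x')
           \<le> L2.cond_tail x'"
proof -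
  define x where "x = restrict x' {1..n}"
  define c where "c = ssum n x"
  define a where "a = x' (Suc n)"
  have x: "x \<in> N1" and a: "0 \<le> a" using N2_extends_N1[OF x'] by (auto simp: x_def a_def)
  have c: "0 \<le> c" unfolding c_def ssum_def using N1_nonneg[OF x] by (intro sum_nonneg) auto
  have sum_x': "ssum (Suc n) x' = c + a" by (simp add: ssum_Suc c_def x_def a_def)
  have kern_x': "L2.kern x' = m2 x'" using x' by (simp add: L2.kern_def)
  have "ennreal (L1.tail (c + a)) * L1.cond_tail_enn x
      \<le> ennreal (L1.tail c) * (\<integral>\<^sup>+y. ennreal (L1.tail (c + a + y)) \<partial>L2.kern x')"
    unfolding L1.cond_tail_enn_def c_def[symmetric]
  proof (rule L1.tail_shift_st_le[OF c a])
    show "prob_space (L2.kern x')" "sets (L2.kern x') = sets borel" by (rule L2.kern_prob, rule L2.kern_sets)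
    show "prob_space (L1.kern x)" "sets (L1.kern x) = sets borel" by (rule L1.kern_prob, rule L1.kern_sets)
    show "st_le (L2.kern x') (L1.kern x)" using st_next[OF x'] x by (simp add: kern_x' L1.kern_def x_def)
    show "AE y in L1.kern x. 0 \<le> y" by (rule L1.AE_kern_nonneg)
  qed
  also have "\<dots> = ennreal (L1.tail c) * ennreal (L2.cond_tail x')"
    by (simp add: L2.cond_tail_enn_eq[symmetric] L2.cond_tail_enn_def sum_x' add.assoc)
  finally have "L1.tail (c + a) * L1.cond_tail x \<le> L1.tail c * L2.cond_tail x'"
    by (simp add: L1.cond_tail_enn_eq ennreal_mult[symmetric] L1.tail_nonneg L1.cond_tail_nonneg
        L2.cond_tail_nonneg ennreal_le_iff)
  then show ?thesis
    using L1.tail_nonneg[of c] L2.cond_tail_nonneg[of x']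
    by (cases "L1.tail c = 0") (auto simp: sum_x' x_def[symmetric] c_def[symmetric] field_simps)
qed

lemma nn_integral_cond_tail_sq_le:
  "(\<integral>\<^sup>+\<omega>. ennreal (L1.cond_tail (first_n X n \<omega>) * L1.cond_tail (first_n X n \<omega>)
                      / L1.tail (partial_sum X n \<omega>)) \<partial>M)
     \<le> ennreal (L1.reach (Suc (Suc n)))"
proof -
  define w where "w x = L1.cond_tail x / L1.tail (ssum n x)" for x
  have w[measurable]: "w \<in> borel_measurable (vecM n)" unfolding w_def by measurable
  have w_nonneg: "0 \<le> w x" for x unfolding w_def by (simp add: L1.cond_tail_nonneg L1.tail_nonneg)
  have "(\<integral>\<^sup>+\<omega>. ennreal (L1.cond_tail (first_n X n \<omega>) * L1.cond_tail (first_n X n \<omega>)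
                      / L1.tail (partial_sum X n \<omega>)) \<partial>M)
      = (\<integral>\<^sup>+\<omega>. ennreal (w (first_n X n \<omega>) * L1.cond_tail (first_n X n \<omega>)) \<partial>M)"
    by (simp add: w_def L1.partial_sum_eq_ssum[of n] mult.commute)
  also have "\<dots> = (\<integral>\<^sup>+\<omega>. ennreal (w (first_n X n \<omega>) * L1.tail (partial_sum X (Suc n) \<omega>)) \<partial>M)"
    by (rule L1.nn_integral_weighted_tail_next[OF w w_nonneg, symmetric])
  also have "\<dots> \<le> (\<integral>\<^sup>+\<omega>. ennreal (L2.cond_tail (first_n X (Suc n) \<omega>)) \<partial>M)"
    using L2.AE_first_n_in_Nn
  proof (rule nn_integral_mono_AE[OF AE_mp], intro AE_I2 impI)
    fix \<omega> assume "first_n X (Suc n) \<omega> \<in> N2"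
    from cond_tail_ratio_le[OF this]
    show "ennreal (w (first_n X n \<omega>) * L1.tail (partial_sum X (Suc n) \<omega>))
        \<le> ennreal (L2.cond_tail (first_n X (Suc n) \<omega>))"
      by (intro ennreal_leI) (simp add: L1.restrict_first_n w_def L1.partial_sum_eq_ssum[of "Suc n"])
  qed
  also have "\<dots> = ennreal (L1.reach (Suc (Suc n)))"
    by (rule L2.reach_Suc_eq_nn_integral_cond_tail[symmetric])
  finally show ?thesis .
qed

text \<open>Cauchy--Schwarz with \<open>0 \<le> cond_tail\<^sub>n(X\<^sub>1,\<dots>,X\<^sub>n) \<le> tail(S\<^sub>n)\<close> closes the argument.\<close>

lemma reach_log_concave: "(L1.reach (Suc n))\<^sup>2 \<le> L1.reach n * L1.reach (Suc (Suc n))"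
proof -
  let ?k = "\<lambda>\<omega>. L1.cond_tail (first_n X n \<omega>)" and ?a = "\<lambda>\<omega>. L1.tail (partial_sum X n \<omega>)"
  have "ennreal ((L1.reach (Suc n))\<^sup>2) = (\<integral>\<^sup>+\<omega>. ennreal (?k \<omega>) \<partial>M)\<^sup>2"
    by (simp add: L1.reach_Suc_eq_nn_integral_cond_tail[symmetric] ennreal_power L1.reach_nonneg)
  also have "\<dots> \<le> (\<integral>\<^sup>+\<omega>. ennreal (?a \<omega>) \<partial>M) * (\<integral>\<^sup>+\<omega>. ennreal (?k \<omega> * ?k \<omega> / ?a \<omega>) \<partial>M)"
    by (rule nn_integral_square_le_ratio)
       (auto simp: L1.cond_tail_nonneg L1.cond_tail_le L1.partial_sum_eq_ssum)
  also have "\<dots> \<le> ennreal (L1.reach n) * ennreal (L1.reach (Suc (Suc n)))"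
    by (intro mult_mono nn_integral_cond_tail_sq_le) (simp_all add: L1.reach_eq_nn_integral_tail)
  finally show ?thesis
    by (simp add: ennreal_mult[symmetric] L1.reach_nonneg)
qed

end

theorem proposition3p4:
  fixes M :: "'a measure" and X :: "nat \<Rightarrow> 'a \<Rightarrow> real" and T :: "'a \<Rightarrow> real"
  assumes "prob_space M"
    and X_rv: "\<And>k. k \<ge> 1 \<Longrightarrow> X k \<in> borel_measurable M"
    and X_nonneg: "\<And>k \<omega>. k \<ge> 1 \<Longrightarrow> \<omega> \<in> space M \<Longrightarrow> X k \<omega> \<ge> 0"
    and T_rv: "T \<in> borel_measurable M"
    and T_nonneg: "\<And>\<omega>. \<omega> \<in> space M \<Longrightarrow> T \<omega> \<ge> 0"
    and indep: "prob_space.indep_set M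
                  {T -` A \<inter> space M | A. A \<in> sets borel}
                  {(\<lambda>\<omega>. \<lambda>k\<in>{1::nat..}. X k \<omega>) -` A \<inter> space M | A.
                      A \<in> sets (Pi\<^sub>M {1::nat..} (\<lambda>_. borel :: real measure))}"
    and a: "DFR M T"
    and b: "\<not> (measure M {\<omega>\<in>space M. T \<omega> = 0} > 0 \<and> measure M {\<omega>\<in>space M. X 1 \<omega> = 0} > 0)"
    and c: "\<exists>(Nset :: nat \<Rightarrow> (nat \<Rightarrow> real) set) (\<mu> :: nat \<Rightarrow> (nat \<Rightarrow> real) \<Rightarrow> real measure).
              (\<forall>n\<ge>1. Nset n \<in> sets (vecM n)
                 \<and> Nset n \<subseteq> {x. \<forall>i\<in>{1..n}. x i \<ge> 0}
                 \<and> measure M {\<omega>\<in>space M. first_n X n \<omega> \<in> Nset n} = 1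
                 \<and> N_reg_cond_dist M X n (Nset n) (\<mu> n))
            \<and> (\<forall>x\<in>Nset 1. st_le (\<mu> 1 x) (distr M borel (X 1)))
            \<and> (\<forall>n\<ge>1. (\<forall>x\<in>Nset (Suc n). restrict x {1..n} \<in> Nset n \<and> x (Suc n) \<ge> 0)
                 \<and> (\<forall>x\<in>Nset (Suc n). st_le (\<mu> (Suc n) x) (\<mu> n (restrict x {1..n}))))"
  shows "discrete_DFR M (\<lambda>\<omega>. counting X (T \<omega>) \<omega>)"
proof -
  interpret renewal_setup M T X
    using assms
    by (intro renewal_setup.intro dfr_lifetime.intro renewal_setup_axioms.intro dfr_lifetime_axioms.intro)
       auto
  from c obtain Nset :: "nat \<Rightarrow> (nat \<Rightarrow> real) set" and \<mu> :: "nat \<Rightarrow> (nat \<Rightarrow> real) \<Rightarrow> real measure"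
    where levels: "\<And>n. n \<ge> 1 \<Longrightarrow> Nset n \<in> sets (vecM n) \<and> Nset n \<subseteq> {x. \<forall>i\<in>{1..n}. x i \<ge> 0}
                 \<and> measure M {\<omega>\<in>space M. first_n X n \<omega> \<in> Nset n} = 1 \<and> N_reg_cond_dist M X n (Nset n) (\<mu> n)"
      and first: "\<forall>x\<in>Nset 1. st_le (\<mu> 1 x) (distr M borel (X 1))"
      and step: "\<And>n. n \<ge> 1 \<Longrightarrow> (\<forall>x\<in>Nset (Suc n). restrict x {1..n} \<in> Nset n \<and> x (Suc n) \<ge> 0)
                 \<and> (\<forall>x\<in>Nset (Suc n). st_le (\<mu> (Suc n) x) (\<mu> n (restrict x {1..n})))"
    by blast
  have level: "kernel_level M T X n (Nset n) (\<mu> n)" if "n \<ge> 1" for n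
    using levels[OF that] by (intro kernel_level.intro kernel_level_axioms.intro renewal_setup_axioms) auto
  have "(reach (Suc n))\<^sup>2 \<le> reach n * reach (Suc (Suc n))" for n
  proof (cases "n = 0")
    case True
    interpret first_level M T X "Nset 1" "\<mu> 1"
      using level[of 1] levels[of 1] first by (intro first_level.intro first_level_axioms.intro) auto
    show ?thesis using reach_1_squared_le by (simp add: True reach_0 numeral_2_eq_2 One_nat_def)
  next
    case False
    interpret consecutive_levels M T X n "Nset n" "\<mu> n" "Nset (Suc n)" "\<mu> (Suc n)"
      using False level levels[of n] step[of n]
      by (intro consecutive_levels.intro consecutive_levels_axioms.intro) auto
    show ?thesis by (rule reach_log_concave)
  qed
  then show ?thesis by (simp add: discrete_DFR_counting_iff)
qed

end
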